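(* Let $C_0,\beta_h,\gamma_h,\beta_v,\gamma_v>0$ be constants and consider the ODE \[\frac{di_h}{dt}=\frac{C_0\beta_h\beta_v\, i_h(1-i_h)}{\beta_v i_h+\gamma_v}-\gamma_h i_h ,\qquad i_h(0)\in[0,1].\] Let $\mathcal{R}_0=\sqrt{\frac{\beta_h}{\gamma_v}\cdot\frac{C_0\beta_v}{\gamma_h}}$. The ODE has two equilibrium points \[E^f=0\quad\text{and}\quad E^e=\frac{C_0\beta_h\beta_v-\gamma_h\gamma_v}{C_0\beta_h\beta_v+\beta_v\gamma_h},\] and (i) $E^f$ is globally asymptotically stable when $\mathcal{R}_0\le 1$, globally exponentially stable when $\mathcal{R}_0<1$, and unstable when $\mathcal{R}_0>1$; (ii) when $\mathcal{R}_0>1$, $E^e$ is locally asymptotically stable, and it is globally asymptotically stable when $i_h(0)\in(0,1]$.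
   Context: For an ODE $y'=f(y)$ with equilibrium $y_0$ ($f(y_0)=0$): $y_0$ is stable if for every $\epsilon>0$ there is $\delta>0$ such that $|y(0)-y_0|<\delta$ implies $|y(t)-y_0|<\epsilon$ for all $t>0$; locally asymptotically stable if there is $a>0$ such that $|y(0)-y_0|\le a$ implies $y(t)\to y_0$; globally asymptotically stable if $y(t)\to y_0$ as $t\to\infty$ (for all considered initial values); globally exponentially stable if it is globally asymptotically stable and there are $M,\kappa>0$ with $|y(t)-y_0|\le Me^{-\kappa t}$; unstable if not stable. *)

theory Defs
  imports "HOL-Analysis.Analysis"
begin

definition ode_sol :: "(real \<Rightarrow> real) \<Rightarrow> (real \<Rightarrow> real) \<Rightarrow> bool" where
  "ode_sol f y \<longleftrightarrow> (\<forall>t\<ge>0. (y has_real_derivative f (y t)) (at t within {0..}))"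

definition stable_eq :: "(real \<Rightarrow> real) \<Rightarrow> real set \<Rightarrow> real \<Rightarrow> bool" where
  "stable_eq f S e \<longleftrightarrow>
     (\<forall>\<epsilon>>0. \<exists>\<delta>>0. \<forall>y. ode_sol f y \<and> y 0 \<in> S \<and> \<bar>y 0 - e\<bar> < \<delta> \<longrightarrow>
        (\<forall>t>0. \<bar>y t - e\<bar> < \<epsilon>))"

definition loc_asym_stable :: "(real \<Rightarrow> real) \<Rightarrow> real set \<Rightarrow> real \<Rightarrow> bool" where
  "loc_asym_stable f S e \<longleftrightarrow>
     (\<exists>a>0. \<forall>y. ode_sol f y \<and> y 0 \<in> S \<and> \<bar>y 0 - e\<bar> \<le> a \<longrightarrow> (y \<longlongrightarrow> e) at_top)"

definition glob_asym_stable :: "(real \<Rightarrow> real) \<Rightarrow> real set \<Rightarrow> real \<Rightarrow> bool" where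
  "glob_asym_stable f S e \<longleftrightarrow>
     (\<forall>y. ode_sol f y \<and> y 0 \<in> S \<longrightarrow> (y \<longlongrightarrow> e) at_top)"

definition glob_exp_stable :: "(real \<Rightarrow> real) \<Rightarrow> real set \<Rightarrow> real \<Rightarrow> bool" where
  "glob_exp_stable f S e \<longleftrightarrow> glob_asym_stable f S e \<and>
     (\<exists>M>0. \<exists>\<kappa>>0. \<forall>y. ode_sol f y \<and> y 0 \<in> S \<longrightarrow>
        (\<forall>t\<ge>0. \<bar>y t - e\<bar> \<le> M * exp (- \<kappa> * t)))"

definition unstable_eq :: "(real \<Rightarrow> real) \<Rightarrow> real set \<Rightarrow> real \<Rightarrow> bool" where
  "unstable_eq f S e \<longleftrightarrow> \<not> stable_eq f S e"

end

theory Submission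
  imports Defs "HOL-Real_Asymp.Real_Asymp"
begin

(* Write the right-hand side as f x = x * (a - b * x) / (\<beta>v * x + \<gamma>v) with
   a = C0 \<beta>h \<beta>v - \<gamma>h \<gamma>v, which has the sign of R0 - 1, and b = C0 \<beta>h \<beta>v + \<beta>v \<gamma>h,
   so that Ee = a / b.

   Solutions are not assumed to be unique, so invariance of [0, 2) has to be proved by hand.
   On an interval around [0, 2] that avoids the pole -\<gamma>v / \<beta>v we have |f x| <= L |x|, hence
   x^2 exp (-2 L t) decreases and x^2 exp (2 L t) increases along solutions, and a solution
   cannot change sign. For x >= 0 the function (x - Ee)^2 is a Lyapunov function, since
   d/dt (x - Ee)^2 = -2 b x (x - Ee)^2 / (\<beta>v x + \<gamma>v) <= 0.
   Weighted versions give the rates: x exp (kappa t) for R0 < 1, 1 / x - k t for R0 <= 1, and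
   (x - Ee)^2 exp (kappa t) for R0 > 1 once x is bounded below by min (x 0) Ee.
   Instability of 0 for R0 > 1 requires solutions starting arbitrarily close to 0 that leave a
   fixed neighbourhood; they come from separation of variables, inverting a primitive of 1 / f
   on (0, Ee). *)

lemma DERIV_nonpos_imp_decreasing_on_nonneg:
  fixes h h' :: "real \<Rightarrow> real"
  assumes deriv: "\<And>u. u \<ge> 0 \<Longrightarrow> (h has_real_derivative h' u) (at u within {0..})"
    and "0 \<le> s" "s \<le> t"
    and nonpos: "\<And>u. s < u \<Longrightarrow> u < t \<Longrightarrow> h' u \<le> 0"
  shows "h t \<le> h s"
proof (rule DERIV_nonpos_imp_decreasing_open[OF \<open>s \<le> t\<close>])
  fix u assume u: "s < u" "u < t"
  have "at u within {0..} = at u"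
    using u \<open>0 \<le> s\<close> by (intro at_within_interior) auto
  then show "\<exists>d. (h has_real_derivative d) (at u) \<and> d \<le> 0"
    using deriv[of u] nonpos[OF u] u \<open>0 \<le> s\<close> by auto
next
  have "continuous_on {0..} h"
    using deriv by (meson DERIV_continuous atLeast_iff continuous_on_eq_continuous_within)
  then show "continuous_on {s..t} h"
    by (rule continuous_on_subset) (use \<open>0 \<le> s\<close> in auto)
qed

lemma DERIV_le_linear_imp_exp_bound:
  fixes h h' :: "real \<Rightarrow> real"
  assumes deriv: "\<And>u. u \<ge> 0 \<Longrightarrow> (h has_real_derivative h' u) (at u within {0..})"
    and "0 \<le> s" "s \<le> t"
    and le: "\<And>u. s < u \<Longrightarrow> u < t \<Longrightarrow> h' u \<le> - \<kappa> * h u"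
  shows "h t \<le> h s * exp (- \<kappa> * (t - s))"
proof -
  have "h t * exp (\<kappa> * t) \<le> h s * exp (\<kappa> * s)"
  proof (rule DERIV_nonpos_imp_decreasing_on_nonneg[OF _ \<open>0 \<le> s\<close> \<open>s \<le> t\<close>])
    fix u :: real assume "u \<ge> 0"
    show "((\<lambda>u. h u * exp (\<kappa> * u)) has_real_derivative (h' u + \<kappa> * h u) * exp (\<kappa> * u))
        (at u within {0..})"
      using deriv[OF \<open>u \<ge> 0\<close>] by (auto intro!: derivative_eq_intros simp: algebra_simps)
  next
    fix u assume "s < u" "u < t"
    from le[OF this] have "h' u + \<kappa> * h u \<le> 0"
      by simp
    then show "(h' u + \<kappa> * h u) * exp (\<kappa> * u) \<le> 0"
      by (simp add: mult_nonpos_nonneg)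
  qed
  then have "h t * exp (\<kappa> * t) * exp (- \<kappa> * t) \<le> h s * exp (\<kappa> * s) * exp (- \<kappa> * t)"
    by (simp add: mult_right_mono)
  then show ?thesis
    by (simp add: mult.assoc right_diff_distrib flip: exp_add)
qed

lemma ode_sol_DERIV:
  "ode_sol f y \<Longrightarrow> t \<ge> 0 \<Longrightarrow> (y has_real_derivative f (y t)) (at t within {0..})"
  unfolding ode_sol_def by blast

lemma ode_sol_continuous_on: "ode_sol f y \<Longrightarrow> continuous_on {0..} y"
  by (meson DERIV_continuous atLeast_iff continuous_on_eq_continuous_within ode_sol_DERIV)

lemma ode_sol_sq_dist_upper:
  assumes sol: "ode_sol f y" and "0 \<le> s" "s \<le> t"
    and inK: "\<forall>u\<in>{s<..<t}. y u \<in> K"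
    and field: "\<forall>x\<in>K. 2 * (x - e) * f x \<le> - \<kappa> * (x - e)^2"
  shows "(y t - e)^2 \<le> (y s - e)^2 * exp (- \<kappa> * (t - s))"
proof (rule DERIV_le_linear_imp_exp_bound[OF _ \<open>0 \<le> s\<close> \<open>s \<le> t\<close>])
  fix u :: real assume "u \<ge> 0"
  show "((\<lambda>u. (y u - e)^2) has_real_derivative 2 * (y u - e) * f (y u)) (at u within {0..})"
    using ode_sol_DERIV[OF sol \<open>u \<ge> 0\<close>] by (auto intro!: derivative_eq_intros)
qed (use inK field in auto)

lemma ode_sol_sq_dist_lower:
  assumes sol: "ode_sol f y" and "0 \<le> s" "s \<le> t"
    and inK: "\<forall>u\<in>{s<..<t}. y u \<in> K"
    and field: "\<forall>x\<in>K. 2 * (x - e) * f x \<ge> - \<kappa> * (x - e)^2"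
  shows "(y s - e)^2 * exp (- \<kappa> * (t - s)) \<le> (y t - e)^2"
proof -
  have "- ((y t - e)^2) \<le> - ((y s - e)^2) * exp (- \<kappa> * (t - s))"
  proof (rule DERIV_le_linear_imp_exp_bound[OF _ \<open>0 \<le> s\<close> \<open>s \<le> t\<close>])
    fix u :: real assume "u \<ge> 0"
    show "((\<lambda>u. - ((y u - e)^2)) has_real_derivative - (2 * (y u - e) * f (y u)))
        (at u within {0..})"
      using ode_sol_DERIV[OF sol \<open>u \<ge> 0\<close>] by (auto intro!: derivative_eq_intros)
  next
    fix u assume "s < u" "u < t"
    then have "- \<kappa> * (y u - e)^2 \<le> 2 * (y u - e) * f (y u)"
      using inK field by auto
    then show "- (2 * (y u - e) * f (y u)) \<le> - \<kappa> * - ((y u - e)^2)"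
      by simp
  qed
  then show ?thesis by simp
qed

lemma abs_mult_le_sq:
  fixes x z L :: real
  assumes "\<bar>z\<bar> \<le> L * \<bar>x\<bar>"
  shows "\<bar>x * z\<bar> \<le> L * x^2"
proof -
  have "\<bar>x * z\<bar> \<le> \<bar>x\<bar> * (L * \<bar>x\<bar>)"
    unfolding abs_mult using assms by (rule mult_left_mono) simp
  also have "\<dots> = L * x^2"
    by (simp add: power2_eq_square mult.left_commute)
  finally show ?thesis .
qed

lemma ode_sol_zero_stays_zero:
  assumes sol: "ode_sol f y" and "0 \<le> t" and inK: "\<forall>u\<in>{0<..<t}. y u \<in> K"
    and lin: "\<forall>x\<in>K. \<bar>f x\<bar> \<le> L * \<bar>x\<bar>" and "y 0 = 0"
  shows "y t = 0"
proof -
  have "\<forall>x\<in>K. 2 * (x - 0) * f x \<le> - (- 2 * L) * (x - 0)^2"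
  proof
    fix x assume "x \<in> K"
    have "x * f x \<le> L * x^2"
      using abs_mult_le_sq[OF lin[rule_format, OF \<open>x \<in> K\<close>]] by linarith
    then show "2 * (x - 0) * f x \<le> - (- 2 * L) * (x - 0)^2"
      by simp
  qed
  from ode_sol_sq_dist_upper[OF sol order_refl \<open>0 \<le> t\<close> inK this] show ?thesis
    using \<open>y 0 = 0\<close> by simp
qed

lemma ode_sol_pos_stays_pos:
  assumes sol: "ode_sol f y" and "0 \<le> t" and inK: "\<forall>u\<in>{0..t}. y u \<in> K"
    and lin: "\<forall>x\<in>K. \<bar>f x\<bar> \<le> L * \<bar>x\<bar>" and "y 0 > 0"
  shows "y t > 0"
proof (rule ccontr)
  assume "\<not> y t > 0"
  moreover have "continuous_on {0..t} y"
    using ode_sol_continuous_on[OF sol] by (rule continuous_on_subset) auto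
  ultimately obtain u where u: "0 \<le> u" "u \<le> t" "y u = 0"
    using IVT2'[of y t 0 0] \<open>y 0 > 0\<close> \<open>0 \<le> t\<close> by auto
  have "\<forall>x\<in>K. 2 * (x - 0) * f x \<ge> - (2 * L) * (x - 0)^2"
  proof
    fix x assume "x \<in> K"
    have "- (L * x^2) \<le> x * f x"
      using abs_mult_le_sq[OF lin[rule_format, OF \<open>x \<in> K\<close>]] by linarith
    then show "2 * (x - 0) * f x \<ge> - (2 * L) * (x - 0)^2"
      by simp
  qed
  from ode_sol_sq_dist_lower[OF sol order_refl \<open>0 \<le> u\<close> _ this]
  have "(y 0)^2 * exp (- (2 * L) * u) \<le> 0"
    using inK u by auto
  with \<open>y 0 > 0\<close> show False
    by (simp add: mult_le_0_iff)
qed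

lemma continuous_on_stays_in_interval:
  fixes y :: "real \<Rightarrow> real"
  assumes cont: "continuous_on {0..} y" and y0: "y 0 \<in> {\<alpha>..\<beta>}"
    and step: "\<And>t. t \<ge> 0 \<Longrightarrow> \<forall>u\<in>{0..t}. y u \<in> {\<alpha>..\<beta>} \<Longrightarrow> y t \<in> {\<alpha><..<\<beta>}"
    and "t \<ge> 0"
  shows "y t \<in> {\<alpha>..\<beta>}"
proof (rule ccontr)
  assume "y t \<notin> {\<alpha>..\<beta>}"
  define C where "C = {0..t} \<inter> y -` (- {\<alpha><..<\<beta>})"
  have "closed C"
    unfolding C_def using cont
    by (intro continuous_closed_preimage) (auto elim: continuous_on_subset)
  moreover have "C \<noteq> {}" "bdd_below C"
    using \<open>y t \<notin> {\<alpha>..\<beta>}\<close> \<open>t \<ge> 0\<close> by (auto simp: C_def intro!: bdd_belowI[of _ 0])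
  ultimately have "Inf C \<in> C"
    by (rule closed_contains_Inf[rotated -1])
  define m where "m = Inf C"
    \<comment> \<open>the first time \<open>y\<close> leaves the open interval\<close>
  have m: "0 \<le> m" "m \<le> t" "y m \<notin> {\<alpha><..<\<beta>}"
    using \<open>Inf C \<in> C\<close> by (auto simp: C_def m_def)
  have before_m: "y u \<in> {\<alpha><..<\<beta>}" if "0 \<le> u" "u < m" for u
  proof (rule ccontr)
    assume "y u \<notin> {\<alpha><..<\<beta>}"
    then have "u \<in> C" using that m by (auto simp: C_def)
    then have "m \<le> u" unfolding m_def using \<open>bdd_below C\<close> by (rule cInf_lower)
    with that show False by simp
  qed
  have "\<forall>u\<in>{0..m}. y u \<in> {\<alpha>..\<beta>}"
  proof (cases "m = 0")
    case True
    then show ?thesis using y0 by auto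
  next
    case False
    have "closed ({0..m} \<inter> y -` {\<alpha>..\<beta>})"
      using cont by (intro continuous_closed_preimage) (auto elim: continuous_on_subset)
    moreover have "{0..<m} \<subseteq> {0..m} \<inter> y -` {\<alpha>..\<beta>}"
      using before_m by fastforce
    ultimately have "closure {0..<m} \<subseteq> {0..m} \<inter> y -` {\<alpha>..\<beta>}"
      by (rule closure_minimal[rotated])
    then show ?thesis
      using False m(1) by auto
  qed
  with step[OF m(1)] m(3) show False by simp
qed

lemma inv_into_has_real_derivative:
  fixes G :: "real \<Rightarrow> real"
  assumes "open S" "inj_on G S" "x \<in> S"
    and G_deriv: "\<And>z. z \<in> S \<Longrightarrow> (G has_real_derivative d z) (at z)" and "d x \<noteq> 0"
  shows "(inv_into S G has_real_derivative inverse (d x)) (at (G x))"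
proof -
  have "continuous_on S G"
    by (intro continuous_at_imp_continuous_on ballI DERIV_isCont[OF G_deriv])
  moreover have "(G has_derivative (\<lambda>h. d x * h)) (at x)"
    using G_deriv[OF \<open>x \<in> S\<close>] by (simp add: has_field_derivative_def)
  moreover have "(\<lambda>h. d x * h) \<circ> (\<lambda>h. inverse (d x) * h) = id"
    using \<open>d x \<noteq> 0\<close> by (auto simp: fun_eq_iff)
  ultimately have "(inv_into S G has_derivative (\<lambda>h. inverse (d x) * h)) (at (G x))"
    using \<open>open S\<close> \<open>x \<in> S\<close> inv_into_f_f[OF \<open>inj_on G S\<close>] by (metis has_derivative_inverse_strong)
  then show ?thesis
    by (simp add: has_field_derivative_def)
qed

lemma DERIV_pos_imp_strict_mono_on:
  fixes G :: "real \<Rightarrow> real"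
  assumes "\<And>x. p < x \<Longrightarrow> x < q \<Longrightarrow> \<exists>d. (G has_real_derivative d) (at x) \<and> 0 < d"
  shows "strict_mono_on {p<..<q} G"
proof (rule strict_mono_onI)
  fix u v assume "u \<in> {p<..<q}" "v \<in> {p<..<q}" "u < v"
  then show "G u < G v"
    using assms by (intro DERIV_pos_imp_increasing[OF \<open>u < v\<close>]) auto
qed

lemma IVT_unbounded_above:
  fixes G :: "real \<Rightarrow> real"
  assumes "continuous_on {x0..<q} G" and unbounded: "\<And>M. \<exists>x. x0 \<le> x \<and> x < q \<and> M \<le> G x"
    and "G x0 \<le> c"
  shows "\<exists>x. x0 \<le> x \<and> x < q \<and> G x = c"
proof -
  obtain x1 where x1: "x0 \<le> x1" "x1 < q" "c \<le> G x1"
    using unbounded by blast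
  have "continuous_on {x0..x1} G"
    using assms(1) by (rule continuous_on_subset) (use x1 in auto)
  then obtain x where "x0 \<le> x" "x \<le> x1" "G x = c"
    using IVT'[of G x0 c x1] x1 \<open>G x0 \<le> c\<close> by blast
  with x1 show ?thesis
    by auto
qed

lemma ode_sol_by_separation_of_variables:
  fixes f G :: "real \<Rightarrow> real"
  assumes G_deriv: "\<And>x. p < x \<Longrightarrow> x < q \<Longrightarrow> (G has_real_derivative inverse (f x)) (at x)"
    and f_pos: "\<And>x. p < x \<Longrightarrow> x < q \<Longrightarrow> f x > 0"
    and unbounded: "\<And>M. \<exists>x. x0 \<le> x \<and> x < q \<and> M \<le> G x"
    and "p < x0"
  shows "\<exists>y. ode_sol f y \<and> y 0 = x0 \<and> (\<forall>x. x0 \<le> x \<longrightarrow> x < q \<longrightarrow> (\<exists>t\<ge>0. y t = x))"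
proof -
  let ?S = "{p<..<q}"
  have mono: "strict_mono_on ?S G"
  proof (rule DERIV_pos_imp_strict_mono_on)
    fix x assume "p < x" "x < q"
    then show "\<exists>d. (G has_real_derivative d) (at x) \<and> 0 < d"
      using G_deriv[of x] f_pos[of x] by auto
  qed
  have "continuous_on {x0..<q} G"
    using \<open>p < x0\<close> by (intro continuous_at_imp_continuous_on ballI DERIV_isCont[OF G_deriv]) auto
  then have level: "\<exists>x. x0 \<le> x \<and> x < q \<and> G x = G x0 + t" if "t \<ge> 0" for t
    using IVT_unbounded_above[OF _ unbounded] that by simp
  define y where "y t = inv_into ?S G (G x0 + t)" for t
  have y_at_level: "y (G x - G x0) = x" if "x \<in> ?S" for x
    using inv_into_f_f[OF strict_mono_on_imp_inj_on[OF mono] that] by (simp add: y_def)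
  have inv_deriv: "(inv_into ?S G has_real_derivative f x) (at (G x))" if "x \<in> ?S" for x
  proof -
    have "(inv_into ?S G has_real_derivative inverse (inverse (f x))) (at (G x))"
      using f_pos[of x] that
      by (intro inv_into_has_real_derivative[OF _ strict_mono_on_imp_inj_on[OF mono] that])
        (auto intro: G_deriv)
    then show ?thesis
      by simp
  qed
  have "ode_sol f y"
    unfolding ode_sol_def
  proof (intro allI impI)
    fix t :: real assume "t \<ge> 0"
    then obtain x where x: "x0 \<le> x" "x < q" "G x = G x0 + t"
      using level by blast
    then have "x \<in> ?S"
      using \<open>p < x0\<close> by simp
    have "((\<lambda>t. G x0 + t) has_real_derivative 1) (at t)"
      by (auto intro!: derivative_eq_intros)
    with inv_deriv[OF \<open>x \<in> ?S\<close>] x(3) have "(y has_real_derivative f x * 1) (at t)"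
      unfolding y_def by (intro DERIV_chain2[where f = "inv_into ?S G"]) auto
    moreover have "y t = x"
      using y_at_level[OF \<open>x \<in> ?S\<close>] x(3) by simp
    ultimately show "(y has_real_derivative f (y t)) (at t within {0..})"
      by (simp add: has_field_derivative_at_within)
  qed
  moreover have "y 0 = x0"
    using y_at_level[of x0] \<open>p < x0\<close> unbounded[of 0] by auto
  moreover have "\<exists>t\<ge>0. y t = x" if "x0 \<le> x" "x < q" for x
  proof (intro exI conjI)
    show "0 \<le> G x - G x0"
      using strict_mono_on_leD[OF mono, of x0 x] that \<open>p < x0\<close> by simp
    show "y (G x - G x0) = x"
      using y_at_level that \<open>p < x0\<close> by simp
  qed
  ultimately show ?thesis
    by blast
qed

lemma tendsto_of_sq_dist_le_exp:
  fixes y :: "real \<Rightarrow> real"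
  assumes "\<kappa> > 0" and bound: "\<forall>t\<ge>0. (y t - e)^2 \<le> C * exp (- \<kappa> * t)"
  shows "(y \<longlongrightarrow> e) at_top"
proof -
  have "\<forall>\<^sub>F t in at_top. norm ((y t - e)^2) \<le> C * exp (- \<kappa> * t)"
    using bound by (intro eventually_at_top_linorderI[of 0]) simp
  moreover have "((\<lambda>t. exp (- \<kappa> * t)) \<longlongrightarrow> 0) at_top"
    using \<open>\<kappa> > 0\<close> by real_asymp
  then have "((\<lambda>t. C * exp (- \<kappa> * t)) \<longlongrightarrow> 0) at_top"
    by (rule tendsto_mult_right_zero)
  ultimately have "((\<lambda>t. (y t - e)^2) \<longlongrightarrow> 0) at_top"
    by (rule Lim_null_comparison)
  then have "((\<lambda>t. sqrt ((y t - e)^2)) \<longlongrightarrow> sqrt 0) at_top"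
    by (rule tendsto_real_sqrt)
  then have "((\<lambda>t. y t - e) \<longlongrightarrow> 0) at_top"
    by (simp add: tendsto_rabs_zero_iff)
  then show ?thesis
    by (rule LIM_zero_cancel)
qed

locale host_vector_model =
  fixes C0 \<beta>h \<gamma>h \<beta>v \<gamma>v :: real
  assumes pos: "C0 > 0" "\<beta>h > 0" "\<gamma>h > 0" "\<beta>v > 0" "\<gamma>v > 0"
begin

definition rhs :: "real \<Rightarrow> real" where
  "rhs i = C0 * \<beta>h * \<beta>v * i * (1 - i) / (\<beta>v * i + \<gamma>v) - \<gamma>h * i"

definition reproduction_number :: real where
  "reproduction_number = sqrt ((\<beta>h / \<gamma>v) * (C0 * \<beta>v / \<gamma>h))"

definition a :: real where "a = C0 * \<beta>h * \<beta>v - \<gamma>h * \<gamma>v"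
definition b :: real where "b = C0 * \<beta>h * \<beta>v + \<beta>v * \<gamma>h"
definition E :: real where "E = a / b"

(* Any left end point in (-\<gamma>v / \<beta>v, 0) would do: it keeps the pole of rhs away. *)
abbreviation strip :: "real set" where "strip \<equiv> {- \<gamma>v / (2 * \<beta>v)..2}"

lemma b_pos: "b > 0"
  unfolding b_def using pos by (intro add_pos_pos mult_pos_pos)

lemma b_mult_E: "b * E = a"
  using b_pos by (simp add: E_def)

lemma E_less_1: "E < 1"
proof -
  have "a < b"
    using mult_pos_pos[OF pos(3) pos(5)] mult_pos_pos[OF pos(4) pos(3)] by (simp add: a_def b_def)
  then show ?thesis
    using b_pos by (simp add: E_def)
qed

lemma denominator_E_pos: "\<beta>v * E + \<gamma>v > 0"
proof -
  have "\<beta>v * a + \<gamma>v * b = C0 * \<beta>h * \<beta>v * (\<beta>v + \<gamma>v)"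
    by (simp add: a_def b_def algebra_simps)
  also have "\<dots> > 0"
    using pos by simp
  finally show ?thesis
    using b_pos by (simp add: E_def field_simps)
qed

lemma E_pos_iff: "E > 0 \<longleftrightarrow> a > 0"
  using b_pos by (simp add: E_def zero_less_divide_iff)

lemma reproduction_number_le_1_iff: "reproduction_number \<le> 1 \<longleftrightarrow> a \<le> 0"
proof -
  have "(\<beta>h / \<gamma>v) * (C0 * \<beta>v / \<gamma>h) = (C0 * \<beta>h * \<beta>v) / (\<gamma>h * \<gamma>v)"
    by (simp add: field_simps)
  then show ?thesis
    using pos by (simp add: reproduction_number_def a_def pos_divide_le_eq)
qed

lemma reproduction_number_less_1_iff: "reproduction_number < 1 \<longleftrightarrow> a < 0"
proof -
  have "(\<beta>h / \<gamma>v) * (C0 * \<beta>v / \<gamma>h) = (C0 * \<beta>h * \<beta>v) / (\<gamma>h * \<gamma>v)"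
    by (simp add: field_simps)
  then show ?thesis
    using pos by (simp add: reproduction_number_def a_def pos_divide_less_eq)
qed

lemma rhs_eq:
  assumes "\<beta>v * x + \<gamma>v \<noteq> 0"
  shows "rhs x = x * (a - b * x) / (\<beta>v * x + \<gamma>v)"
  using assms by (simp add: rhs_def a_def b_def field_simps)

lemma denominator_bounds:
  assumes "0 \<le> x" "x \<le> 2"
  shows "0 < \<beta>v * x + \<gamma>v" "\<beta>v * x + \<gamma>v \<le> 2 * \<beta>v + \<gamma>v"
  using assms pos by (auto intro: add_nonneg_pos)

lemma rhs_zero_iff: "rhs x = 0 \<longleftrightarrow> x = 0 \<or> x = E"
proof (cases "\<beta>v * x + \<gamma>v = 0")
  case True
  then have "x \<noteq> 0" "x \<noteq> E"
    using pos denominator_E_pos by auto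
  with True show ?thesis
    using pos by (simp add: rhs_def)
next
  case False
  then show ?thesis
    using b_pos by (auto simp: rhs_eq E_def field_simps)
qed

lemma rhs_linear_bound: "\<exists>L. \<forall>x\<in>strip. \<bar>rhs x\<bar> \<le> L * \<bar>x\<bar>"
proof -
  have D_pos: "\<beta>v * x + \<gamma>v > 0" if "x \<in> strip" for x
  proof -
    have "\<beta>v * x \<ge> \<beta>v * (- \<gamma>v / (2 * \<beta>v))"
      using that pos by (intro mult_left_mono) auto
    then show ?thesis
      using pos by simp
  qed
  define g where "g x = (a - b * x) / (\<beta>v * x + \<gamma>v)" for x
  have "continuous_on strip g"
    unfolding g_def using D_pos by (intro continuous_intros) fastforce
  then have "bounded (g ` strip)"
    by (intro compact_imp_bounded compact_continuous_image) auto
  then obtain L where "\<forall>x\<in>strip. \<bar>g x\<bar> \<le> L"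
    by (auto simp: bounded_iff)
  moreover have "rhs x = x * g x" if "x \<in> strip" for x
    using D_pos[OF that] by (simp add: rhs_eq g_def)
  ultimately show ?thesis
    by (metis abs_mult abs_ge_zero mult.commute mult_right_mono)
qed

lemma rhs_lyapunov:
  assumes "x \<ge> 0"
  shows "2 * (x - E) * rhs x = - (2 * b * x / (\<beta>v * x + \<gamma>v)) * (x - E)^2"
proof -
  have "\<beta>v * x + \<gamma>v > 0"
    using assms pos by (simp add: add_nonneg_pos)
  moreover have "a - b * x = - b * (x - E)"
    using b_mult_E by (simp add: algebra_simps)
  ultimately show ?thesis
    by (simp add: rhs_eq power2_eq_square field_simps)
qed

lemma rhs_lyapunov_le:
  assumes "0 \<le> \<eta>" "\<eta> \<le> x" "x \<le> 2"
  shows "2 * (x - E) * rhs x \<le> - (2 * b * \<eta> / (2 * \<beta>v + \<gamma>v)) * (x - E)^2"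
proof -
  have "2 * b * \<eta> / (2 * \<beta>v + \<gamma>v) \<le> 2 * b * x / (\<beta>v * x + \<gamma>v)"
    using assms b_pos denominator_bounds[of x] by (intro frac_le) auto
  then have "- (2 * b * x / (\<beta>v * x + \<gamma>v)) * (x - E)^2
      \<le> - (2 * b * \<eta> / (2 * \<beta>v + \<gamma>v)) * (x - E)^2"
    by (intro mult_right_mono) auto
  with rhs_lyapunov[of x] assms show ?thesis
    by simp
qed

lemma dist_E_antimono:
  assumes sol: "ode_sol rhs y" and "0 \<le> s" "s \<le> t" and bounds: "\<forall>u\<in>{s<..<t}. y u \<in> {0..2}"
  shows "\<bar>y t - E\<bar> \<le> \<bar>y s - E\<bar>"
proof -
  have "\<forall>x\<in>{0..2}. 2 * (x - E) * rhs x \<le> - 0 * (x - E)^2"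
    using rhs_lyapunov_le[of 0] by simp
  from ode_sol_sq_dist_upper[OF sol \<open>0 \<le> s\<close> \<open>s \<le> t\<close> bounds this]
  have "(y t - E)^2 \<le> (y s - E)^2"
    by simp
  then show ?thesis
    by (simp add: abs_le_square_iff)
qed

lemma sign_preserved_in_strip:
  assumes sol: "ode_sol rhs y" and "0 \<le> t"
    and in_strip: "\<forall>u\<in>{0..t}. y u \<in> strip"
  shows "y 0 = 0 \<Longrightarrow> y t = 0" and "y 0 > 0 \<Longrightarrow> y t > 0"
proof -
  obtain L where L: "\<forall>x\<in>strip. \<bar>rhs x\<bar> \<le> L * \<bar>x\<bar>"
    using rhs_linear_bound by blast
  show "y 0 = 0 \<Longrightarrow> y t = 0"
    using ode_sol_zero_stays_zero[OF sol \<open>0 \<le> t\<close> _ L] in_strip by auto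
  show "y 0 > 0 \<Longrightarrow> y t > 0"
    using ode_sol_pos_stays_pos[OF sol \<open>0 \<le> t\<close> in_strip L] .
qed

lemma solution_in_strip:
  assumes sol: "ode_sol rhs y" and y0: "y 0 \<in> {0..1}" and "t \<ge> 0"
  shows "y t \<in> strip"
proof (rule continuous_on_stays_in_interval[OF ode_sol_continuous_on[OF sol] _ _ \<open>t \<ge> 0\<close>])
  have "- \<gamma>v / (2 * \<beta>v) \<le> 0"
    using pos by simp
  then show "y 0 \<in> strip"
    using y0 by auto
next
  fix t :: real
  assume "t \<ge> 0" and in_strip: "\<forall>u\<in>{0..t}. y u \<in> strip"
  have nonneg: "y u \<ge> 0" if "0 \<le> u" "u \<le> t" for u
  proof -
    have "\<forall>v\<in>{0..u}. y v \<in> strip"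
      using in_strip that by auto
    from sign_preserved_in_strip[OF sol \<open>0 \<le> u\<close> this] y0 show ?thesis
      by (cases "y 0 = 0") auto
  qed
  have "\<bar>y t - E\<bar> \<le> \<bar>y 0 - E\<bar>"
    using dist_E_antimono[OF sol order_refl \<open>t \<ge> 0\<close>] in_strip nonneg by auto
  then have "y t < 2"
    using y0 E_less_1 by (auto simp: abs_le_iff abs_if split: if_splits)
  moreover have "- \<gamma>v / (2 * \<beta>v) < y t"
    using nonneg[of t] \<open>t \<ge> 0\<close> pos by (simp add: less_le_trans[of _ 0])
  ultimately show "y t \<in> {- \<gamma>v / (2 * \<beta>v)<..<2}"
    by simp
qed

lemma solution_sign:
  assumes sol: "ode_sol rhs y" and y0: "y 0 \<in> {0..1}" and "t \<ge> 0"
  shows "y 0 = 0 \<Longrightarrow> y t = 0" and "y 0 > 0 \<Longrightarrow> y t > 0"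
  using sign_preserved_in_strip[OF sol \<open>t \<ge> 0\<close>] solution_in_strip[OF sol y0] by auto

lemma solution_bounds:
  assumes sol: "ode_sol rhs y" and y0: "y 0 \<in> {0..1}" and "t \<ge> 0"
  shows "y t \<in> {0..2}"
  using solution_sign[OF sol y0 \<open>t \<ge> 0\<close>] solution_in_strip[OF sol y0 \<open>t \<ge> 0\<close>] y0
  by (cases "y 0 = 0") auto

lemma rhs_div_sq_le:
  assumes "a \<le> 0" "0 < x" "x \<le> 2"
  shows "rhs x / x^2 \<le> - (b / (2 * \<beta>v + \<gamma>v))"
proof -
  note D = denominator_bounds[of x]
  have "rhs x / x^2 = (a - b * x) / (x * (\<beta>v * x + \<gamma>v))"
    using D assms by (simp add: rhs_eq power2_eq_square)
  also have "\<dots> \<le> - b * x / (x * (\<beta>v * x + \<gamma>v))"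
    using D assms by (intro divide_right_mono) auto
  also have "\<dots> = - (b / (\<beta>v * x + \<gamma>v))"
    using assms by simp
  also have "\<dots> \<le> - (b / (2 * \<beta>v + \<gamma>v))"
    using D assms b_pos by (simp add: frac_le)
  finally show ?thesis .
qed

lemma rhs_le_linear:
  assumes "a < 0" "0 \<le> x" "x \<le> 2"
  shows "rhs x \<le> - (- a / (2 * \<beta>v + \<gamma>v)) * x"
proof -
  note D = denominator_bounds[OF assms(2,3)]
  have "rhs x = x * (a - b * x) / (\<beta>v * x + \<gamma>v)"
    using D by (simp add: rhs_eq)
  also have "\<dots> \<le> x * (a / (\<beta>v * x + \<gamma>v))"
    using assms D b_pos by (simp add: divide_right_mono mult_left_mono)
  also have "\<dots> \<le> x * (a / (2 * \<beta>v + \<gamma>v))"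
    using assms D by (intro mult_left_mono divide_left_mono_neg) auto
  finally show ?thesis
    by (simp add: mult.commute)
qed

lemma solution_le_inverse_linear:
  assumes sol: "ode_sol rhs y" and y0: "y 0 \<in> {0..1}" and "a \<le> 0" and "t \<ge> 0"
  shows "y t \<le> 1 / (1 + b / (2 * \<beta>v + \<gamma>v) * t)"
proof -
  define k where "k = b / (2 * \<beta>v + \<gamma>v)"
  have "k > 0"
    using b_pos pos by (simp add: k_def add_pos_pos)
  consider "y 0 = 0" | "y 0 > 0"
    using y0 by fastforce
  then show ?thesis
  proof cases
    case 1
    then show ?thesis
      using solution_sign(1)[OF sol y0 \<open>t \<ge> 0\<close>] \<open>k > 0\<close> \<open>t \<ge> 0\<close> by (simp flip: k_def)
  next
    case 2
    then have y_pos: "y u > 0" if "u \<ge> 0" for u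
      using solution_sign(2)[OF sol y0 that] by simp
    have "k * t - inverse (y t) \<le> k * 0 - inverse (y 0)"
      \<comment> \<open>for \<open>a = 0\<close> the decay is only algebraic\<close>
    proof (rule DERIV_nonpos_imp_decreasing_on_nonneg[OF _ order_refl \<open>t \<ge> 0\<close>])
      fix u :: real assume "u \<ge> 0"
      show "((\<lambda>u. k * u - inverse (y u)) has_real_derivative k + rhs (y u) / (y u)^2)
          (at u within {0..})"
        using ode_sol_DERIV[OF sol \<open>u \<ge> 0\<close>] y_pos[OF \<open>u \<ge> 0\<close>]
        by (auto intro!: derivative_eq_intros simp: field_simps power2_eq_square)
    next
      fix u :: real assume "0 < u" "u < t"
      then have "rhs (y u) / (y u)^2 \<le> - k"
        using rhs_div_sq_le[OF \<open>a \<le> 0\<close> y_pos[of u]] solution_bounds[OF sol y0, of u]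
        by (simp add: k_def)
      then show "k + rhs (y u) / (y u)^2 \<le> 0"
        by simp
    qed
    moreover have "inverse (y 0) \<ge> 1"
      using 2 y0 by (simp add: one_le_inverse_iff)
    moreover have "0 < 1 + k * t"
      using \<open>k > 0\<close> \<open>t \<ge> 0\<close> by (simp add: add_pos_nonneg)
    ultimately have "inverse (inverse (y t)) \<le> inverse (1 + k * t)"
      by (intro le_imp_inverse_le) auto
    then show ?thesis
      by (simp add: k_def divide_inverse)
  qed
qed

lemma solution_le_exp:
  assumes sol: "ode_sol rhs y" and y0: "y 0 \<in> {0..1}" and "a < 0" and "t \<ge> 0"
  shows "y t \<le> exp (- (- a / (2 * \<beta>v + \<gamma>v)) * t)"
proof -
  have "y t \<le> y 0 * exp (- (- a / (2 * \<beta>v + \<gamma>v)) * (t - 0))"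
    using ode_sol_DERIV[OF sol] \<open>t \<ge> 0\<close> rhs_le_linear[OF \<open>a < 0\<close>] solution_bounds[OF sol y0]
    by (intro DERIV_le_linear_imp_exp_bound[where h' = "\<lambda>u. rhs (y u)"]) auto
  also have "\<dots> \<le> exp (- (- a / (2 * \<beta>v + \<gamma>v)) * t)"
    using y0 by (simp add: mult_left_le_one_le)
  finally show ?thesis .
qed

lemma solution_ge_min:
  assumes sol: "ode_sol rhs y" and y0: "y 0 \<in> {0..1}" and "t \<ge> 0"
  shows "min (y 0) E \<le> y t"
proof -
  have dist: "\<bar>y t - E\<bar> \<le> \<bar>y s - E\<bar>" if "0 \<le> s" "s \<le> t" for s
    using dist_E_antimono[OF sol that] solution_bounds[OF sol y0] that by auto
  show ?thesis
  proof (cases "y 0 \<le> E")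
    case True
    then show ?thesis
      using dist[of 0] \<open>t \<ge> 0\<close> by (auto simp: abs_le_iff abs_if split: if_splits)
  next
    case False
    show ?thesis
    proof (rule ccontr)
      assume "\<not> ?thesis"
      then have "y t < E"
        using False by simp
      moreover have "continuous_on {0..t} y"
        using ode_sol_continuous_on[OF sol] by (rule continuous_on_subset) auto
      ultimately obtain s where "0 \<le> s" "s \<le> t" "y s = E"
        using IVT2'[of y t E 0] False \<open>t \<ge> 0\<close> by auto
      with dist[of s] \<open>y t < E\<close> show False
        by simp
    qed
  qed
qed

lemma solution_tendsto_E:
  assumes sol: "ode_sol rhs y" and y0: "y 0 \<in> {0<..1}" and "a > 0"
  shows "(y \<longlongrightarrow> E) at_top"
proof -
  define \<eta> where "\<eta> = min (y 0) E"
  have "\<eta> > 0"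
    using y0 \<open>a > 0\<close> E_pos_iff by (simp add: \<eta>_def)
  define \<kappa> where "\<kappa> = 2 * b * \<eta> / (2 * \<beta>v + \<gamma>v)"
  have "\<kappa> > 0"
    using \<open>\<eta> > 0\<close> b_pos pos by (simp add: \<kappa>_def add_pos_pos)
  have "(y t - E)^2 \<le> (y 0 - E)^2 * exp (- \<kappa> * t)" if "t \<ge> 0" for t
  proof -
    have "\<forall>u\<in>{0<..<t}. y u \<in> {\<eta>..2}"
      using solution_ge_min[OF sol] solution_bounds[OF sol] y0 by (force simp: \<eta>_def)
    moreover have "\<forall>x\<in>{\<eta>..2}. 2 * (x - E) * rhs x \<le> - \<kappa> * (x - E)^2"
      using rhs_lyapunov_le \<open>\<eta> > 0\<close> by (simp add: \<kappa>_def)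
    ultimately have "(y t - E)^2 \<le> (y 0 - E)^2 * exp (- \<kappa> * (t - 0))"
      by (rule ode_sol_sq_dist_upper[OF sol order_refl that])
    then show ?thesis
      by simp
  qed
  then show ?thesis
    by (intro tendsto_of_sq_dist_le_exp[OF \<open>\<kappa> > 0\<close>]) auto
qed

(* A primitive of 1 / rhs on (0, E) that tends to infinity at E. *)
definition travel_time :: "real \<Rightarrow> real" where
  "travel_time x = (\<gamma>v * ln x - (a * \<beta>v + b * \<gamma>v) / b * ln (a - b * x)) / a"

lemma travel_time_has_derivative:
  assumes "a > 0" "0 < x" "x < E"
  shows "(travel_time has_real_derivative inverse (rhs x)) (at x)"
proof -
  define c where "c = (a * \<beta>v + b * \<gamma>v) / b"
  have "b * x < a"
    using assms b_pos b_mult_E by (metis mult_strict_left_mono)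
  have "(travel_time has_real_derivative (\<gamma>v / x + c * b / (a - b * x)) / a) (at x)"
    unfolding travel_time_def c_def[symmetric] using assms \<open>b * x < a\<close>
    by (auto intro!: derivative_eq_intros simp: field_simps)
  moreover have "(\<gamma>v / x + c * b / (a - b * x)) / a = inverse (rhs x)"
  proof -
    have D: "\<beta>v * x + \<gamma>v > 0"
      using assms E_less_1 denominator_bounds[of x] by simp
    have "\<gamma>v / x + c * b / (a - b * x) = (\<gamma>v * (a - b * x) + c * b * x) / (x * (a - b * x))"
      using assms \<open>b * x < a\<close> by (simp add: field_simps)
    also have "\<gamma>v * (a - b * x) + c * b * x = a * (\<beta>v * x + \<gamma>v)"
      using b_pos by (simp add: c_def field_simps)
    finally show ?thesis
      using assms D by (simp add: rhs_eq)
  qed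
  ultimately show ?thesis
    by simp
qed

lemma travel_time_unbounded:
  assumes "a > 0" "0 < x0" "x0 < E"
  shows "\<exists>x. x0 \<le> x \<and> x < E \<and> M \<le> travel_time x"
proof -
  define c where "c = (a * \<beta>v + b * \<gamma>v) / b"
  have "c > 0"
    using assms b_pos pos by (simp add: c_def add_pos_pos)
  define u where "u = min (a - b * x0) (exp ((\<gamma>v * ln x0 - a * M) / c))"
  have "0 < a - b * x0"
    using assms b_pos b_mult_E by (metis diff_gt_0_iff_gt mult_strict_left_mono)
  then have "u > 0"
    by (simp add: u_def)
  define x where "x = (a - u) / b"
  have x: "x0 \<le> x" "x < E" "a - b * x = u"
    using b_pos \<open>u > 0\<close> by (auto simp: x_def E_def u_def field_simps)
  have "ln u \<le> ln (exp ((\<gamma>v * ln x0 - a * M) / c))"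
    using \<open>u > 0\<close> by (subst ln_le_cancel_iff) (auto simp: u_def)
  then have "c * ln u \<le> \<gamma>v * ln x0 - a * M"
    using \<open>c > 0\<close> by (simp add: pos_le_divide_eq mult.commute)
  moreover have "\<gamma>v * ln x0 \<le> \<gamma>v * ln x"
    using assms x pos by (simp add: mult_left_mono)
  ultimately have "a * M \<le> \<gamma>v * ln x - c * ln (a - b * x)"
    using x by simp
  then have "M \<le> travel_time x"
    using \<open>a > 0\<close> unfolding travel_time_def c_def[symmetric]
    by (simp add: pos_le_divide_eq mult.commute)
  with x show ?thesis
    by blast
qed

lemma solution_through_levels_below_E:
  assumes "a > 0" "0 < x0" "x0 < E"
  shows "\<exists>y. ode_sol rhs y \<and> y 0 = x0 \<and> (\<forall>x. x0 \<le> x \<longrightarrow> x < E \<longrightarrow> (\<exists>t\<ge>0. y t = x))"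
proof (rule ode_sol_by_separation_of_variables[where p = 0])
  fix x :: real assume "0 < x" "x < E"
  then show "(travel_time has_real_derivative inverse (rhs x)) (at x)"
    by (rule travel_time_has_derivative[OF \<open>a > 0\<close>])
  have "b * x < a"
    using \<open>x < E\<close> b_pos b_mult_E by (metis mult_strict_left_mono)
  moreover have "\<beta>v * x + \<gamma>v > 0"
    using \<open>0 < x\<close> \<open>x < E\<close> E_less_1 denominator_bounds[of x] by simp
  ultimately show "rhs x > 0"
    using \<open>0 < x\<close> by (simp add: rhs_eq)
qed (use assms travel_time_unbounded in auto)

lemma glob_asym_stable_disease_free:
  assumes "a \<le> 0"
  shows "glob_asym_stable rhs {0..1} 0"
  unfolding glob_asym_stable_def
proof (intro allI impI)
  fix y assume "ode_sol rhs y \<and> y 0 \<in> {0..1}"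
  then have sol: "ode_sol rhs y" and y0: "y 0 \<in> {0..1}"
    by auto
  define k where "k = b / (2 * \<beta>v + \<gamma>v)"
  have "k > 0"
    using b_pos pos by (simp add: k_def add_pos_pos)
  have "\<forall>\<^sub>F t in at_top. norm (y t) \<le> 1 / (1 + k * t)"
    using solution_le_inverse_linear[OF sol y0 assms] solution_bounds[OF sol y0]
    by (intro eventually_at_top_linorderI[of 0]) (simp add: k_def)
  moreover have "((\<lambda>t. 1 / (1 + k * t)) \<longlongrightarrow> 0) at_top"
    using \<open>k > 0\<close> by real_asymp
  ultimately show "(y \<longlongrightarrow> 0) at_top"
    by (rule Lim_null_comparison)
qed

lemma glob_exp_stable_disease_free:
  assumes "a < 0"
  shows "glob_exp_stable rhs {0..1} 0"
  unfolding glob_exp_stable_def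
proof
  show "glob_asym_stable rhs {0..1} 0"
    using assms glob_asym_stable_disease_free by simp
  have "- a / (2 * \<beta>v + \<gamma>v) > 0"
    using assms pos by (intro divide_pos_pos) auto
  moreover have "\<forall>y. ode_sol rhs y \<and> y 0 \<in> {0..1} \<longrightarrow>
      (\<forall>t\<ge>0. \<bar>y t - 0\<bar> \<le> 1 * exp (- (- a / (2 * \<beta>v + \<gamma>v)) * t))"
    using solution_le_exp[OF _ _ assms] solution_bounds by fastforce
  ultimately show "\<exists>M>0. \<exists>\<kappa>>0. \<forall>y. ode_sol rhs y \<and> y 0 \<in> {0..1} \<longrightarrow>
      (\<forall>t\<ge>0. \<bar>y t - 0\<bar> \<le> M * exp (- \<kappa> * t))"
    using zero_less_one by blast
qed

lemma unstable_disease_free: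
  assumes "a > 0"
  shows "unstable_eq rhs {0..1} 0"
  unfolding unstable_eq_def stable_eq_def
proof
  have "E > 0"
    using assms E_pos_iff by simp
  assume "\<forall>\<epsilon>>0. \<exists>\<delta>>0. \<forall>y. ode_sol rhs y \<and> y 0 \<in> {0..1} \<and> \<bar>y 0 - 0\<bar> < \<delta> \<longrightarrow>
    (\<forall>t>0. \<bar>y t - 0\<bar> < \<epsilon>)"
  then obtain \<delta> where "\<delta> > 0" and small: "\<forall>y. ode_sol rhs y \<and> y 0 \<in> {0..1} \<and> \<bar>y 0\<bar> < \<delta> \<longrightarrow>
    (\<forall>t>0. \<bar>y t\<bar> < E / 2)"
    using \<open>E > 0\<close> by (metis diff_zero half_gt_zero)
  define x0 where "x0 = min (\<delta> / 2) (E / 2)"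
  have x0: "0 < x0" "x0 < \<delta>" "x0 \<le> E / 2"
    using \<open>\<delta> > 0\<close> \<open>E > 0\<close> by (auto simp: x0_def)
  then obtain y where sol: "ode_sol rhs y" and "y 0 = x0"
    and reach: "\<forall>x. x0 \<le> x \<longrightarrow> x < E \<longrightarrow> (\<exists>t\<ge>0. y t = x)"
    using solution_through_levels_below_E[OF assms] \<open>E > 0\<close> by fastforce
  obtain t where "t \<ge> 0" "y t = 3 * E / 4"
    using reach[rule_format, of "3 * E / 4"] x0 \<open>E > 0\<close> by auto
  have "t \<noteq> 0"
    using \<open>y 0 = x0\<close> \<open>y t = 3 * E / 4\<close> x0 \<open>E > 0\<close> by auto
  have "y 0 \<in> {0..1}"
    using \<open>y 0 = x0\<close> x0 E_less_1 by auto
  with small sol \<open>y 0 = x0\<close> x0 \<open>t \<ge> 0\<close> \<open>t \<noteq> 0\<close> have "\<bar>y t\<bar> < E / 2"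
    by auto
  with \<open>y t = 3 * E / 4\<close> \<open>E > 0\<close> show False
    by simp
qed

lemma glob_asym_stable_endemic:
  assumes "a > 0"
  shows "glob_asym_stable rhs {0<..1} E"
  unfolding glob_asym_stable_def using solution_tendsto_E assms by blast

lemma loc_asym_stable_endemic:
  assumes "a > 0"
  shows "loc_asym_stable rhs {0..1} E"
  unfolding loc_asym_stable_def
proof (intro exI[of _ "E / 2"] conjI allI impI)
  show "E / 2 > 0"
    using assms E_pos_iff by simp
  fix y assume "ode_sol rhs y \<and> y 0 \<in> {0..1} \<and> \<bar>y 0 - E\<bar> \<le> E / 2"
  moreover from this have "y 0 > 0"
    using \<open>E / 2 > 0\<close> abs_le_D2[of "y 0 - E" "E / 2"] by auto
  ultimately show "(y \<longlongrightarrow> E) at_top"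
    using solution_tendsto_E assms by auto
qed

end

theorem theorem4:
  fixes C0 \<beta>h \<gamma>h \<beta>v \<gamma>v :: real
  assumes "C0 > 0" "\<beta>h > 0" "\<gamma>h > 0" "\<beta>v > 0" "\<gamma>v > 0"
  defines "f \<equiv> (\<lambda>i::real. C0 * \<beta>h * \<beta>v * i * (1 - i) / (\<beta>v * i + \<gamma>v) - \<gamma>h * i)"
    and "R0 \<equiv> sqrt ((\<beta>h / \<gamma>v) * (C0 * \<beta>v / \<gamma>h))"
    and "Ef \<equiv> (0::real)"
    and "Ee \<equiv> (C0 * \<beta>h * \<beta>v - \<gamma>h * \<gamma>v) / (C0 * \<beta>h * \<beta>v + \<beta>v * \<gamma>h)"
  shows "(f Ef = 0 \<and> f Ee = 0 \<and> (\<forall>x. f x = 0 \<longrightarrow> x = Ef \<or> x = Ee))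
    \<and> (R0 \<le> 1 \<longrightarrow> glob_asym_stable f {0..1} Ef)
    \<and> (R0 < 1 \<longrightarrow> glob_exp_stable f {0..1} Ef)
    \<and> (R0 > 1 \<longrightarrow> unstable_eq f {0..1} Ef)
    \<and> (R0 > 1 \<longrightarrow> loc_asym_stable f {0..1} Ee \<and> glob_asym_stable f {0<..1} Ee)"
proof -
  interpret host_vector_model C0 \<beta>h \<gamma>h \<beta>v \<gamma>v
    using assms(1-5) by unfold_locales
  have "f = rhs" "R0 = reproduction_number" "Ee = E"
    by (simp_all add: f_def rhs_def R0_def reproduction_number_def Ee_def E_def a_def b_def fun_eq_iff)
  moreover have "reproduction_number > 1 \<longleftrightarrow> a > 0"
    using reproduction_number_le_1_iff by linarith
  ultimately show ?thesis
    unfolding Ef_def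
    using rhs_zero_iff reproduction_number_le_1_iff reproduction_number_less_1_iff
      glob_asym_stable_disease_free glob_exp_stable_disease_free unstable_disease_free
      glob_asym_stable_endemic loc_asym_stable_endemic
    by auto
qed

end
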